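(* Let $\mathcal{U}=\{1,\dots,K\}$ be a set of $K\ge 1$ users (UEs) and let $\mathcal{B}=\mathcal{T}\cup\mathcal{S}$ be a finite set of base stations partitioned into a set $\mathcal{T}$ of terrestrial base stations and a set $\mathcal{S}$ of satellite base stations. Let $x_{ij}\in\{0,1\}$ ($i\in\mathcal{U}$, $j\in\mathcal{B}$) be a fixed association, with each UE associated to exactly one base station ($\sum_{j\in\mathcal{B}}x_{ij}=1$ for every $i$), and let $r_{ij}>0$ be fixed constants not depending on $\varepsilon$. For $\varepsilon\in[0,1]$ define the throughput of UE $i$ as $$R_i(\varepsilon)=\sum_{j\in\mathcal{S}}\varepsilon\,x_{ij}r_{ij}+\sum_{j\in\mathcal{T}}(1-\varepsilon)\,x_{ij}r_{ij},$$ and the utility $f(\varepsilon)=\sum_{i\in\mathcal{U}}\log R_i(\varepsilon)$ (with $\log 0=-\infty$), in which all UEs are weighted equally. Let $K_{\mathcal{S}}$ denote the number of UEs associated to a satellite base station, i.e. $K_{\mathcal{S}}=\#\{i\in\mathcal{U}:\ x_{ij}=1\text{ for some } j\in\mathcal{S}\}$. Then the optimal bandwidth fraction allocated to the satellite tier, i.e. the maximizer of $f$ over $\varepsilon\in[0,1]$, is $$\varepsilon^*=\frac{K_{\mathcal{S}}}{K}.$$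
   Context: Model: a total bandwidth $W$ is split orthogonally, a fraction $\varepsilon$ going to all satellite base stations and a fraction $1-\varepsilon$ to all terrestrial base stations; the quantity $r_{ij}=\frac{W}{k_j}\log_2(1+\gamma_{ij})$ (with $k_j$ the number of UEs served by base station $j$ and $\gamma_{ij}$ the SINR, both independent of $\varepsilon$) is the throughput UE $i$ would obtain from base station $j$ if that base station's tier were given the whole bandwidth. "All UEs have the same requirements" corresponds to the unweighted sum of logarithms in $f$. *)

theory Defs
  imports "HOL-Analysis.Analysis" "HOL-Library.Extended_Real"
begin

definition throughput ::
  "'b set \<Rightarrow> 'b set \<Rightarrow> (nat \<Rightarrow> 'b \<Rightarrow> real) \<Rightarrow> (nat \<Rightarrow> 'b \<Rightarrow> real) \<Rightarrow> nat \<Rightarrow> real \<Rightarrow> real" where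
  "throughput T S x r i \<epsilon> =
     (\<Sum>j\<in>S. \<epsilon> * x i j * r i j) + (\<Sum>j\<in>T. (1 - \<epsilon>) * x i j * r i j)"

definition eln :: "real \<Rightarrow> ereal" where
  "eln y = (if y > 0 then ereal (ln y) else -\<infinity>)"

definition utility ::
  "nat \<Rightarrow> 'b set \<Rightarrow> 'b set \<Rightarrow> (nat \<Rightarrow> 'b \<Rightarrow> real) \<Rightarrow> (nat \<Rightarrow> 'b \<Rightarrow> real) \<Rightarrow> real \<Rightarrow> ereal" where
  "utility K T S x r \<epsilon> = (\<Sum>i\<in>{1..K}. eln (throughput T S x r i \<epsilon>))"

definition num_sat_users :: "nat \<Rightarrow> 'b set \<Rightarrow> (nat \<Rightarrow> 'b \<Rightarrow> real) \<Rightarrow> nat" where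
  "num_sat_users K S x = card {i\<in>{1..K}. \<exists>j\<in>S. x i j = 1}"

end

theory Submission
  imports Defs
begin

text \<open>With a single association per user, user i's throughput is either \<open>\<epsilon> a\<^sub>i\<close> (satellite
  users) or \<open>(1 - \<epsilon>) b\<^sub>i\<close> (terrestrial users), so up to a constant the utility is
  \<open>K\<^sub>S ln \<epsilon> + (K - K\<^sub>S) ln (1 - \<epsilon>)\<close>, which is strictly concave with its peak at \<open>K\<^sub>S / K\<close>.
  Rather than differentiating, we compare with the candidate \<open>p = K\<^sub>S / K\<close> through the
  tangent inequality \<open>ln y - ln z \<le> (y - z) / z\<close>: summed over the users, the right-hand
  sides add up to a nonpositive number, and the inequality is strict whenever \<open>\<epsilon> \<noteq> p\<close>.
  At \<open>\<epsilon> \<in> {0, 1}\<close> some throughput vanishes unless that tier serves everybody, and the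
  utility is \<open>-\<infinity>\<close>.\<close>

lemma binary_sum_eq_1_obtains_point:
  fixes x :: "'b \<Rightarrow> real"
  assumes "finite A" "\<And>j. j \<in> A \<Longrightarrow> x j \<in> {0, 1}" "(\<Sum>j\<in>A. x j) = 1"
  obtains j where "j \<in> A" "\<And>k. k \<in> A \<Longrightarrow> x k = (if k = j then 1 else 0)"
proof -
  obtain j where j: "j \<in> A" "x j \<noteq> 0"
    using assms(3) by (metis sum.neutral zero_neq_one)
  then have "x j = 1" using assms(2) by auto
  then have "(\<Sum>k\<in>A - {j}. x k) = 0"
    using assms(1,3) j(1) by (simp add: sum_diff1)
  moreover have "\<And>k. k \<in> A - {j} \<Longrightarrow> x k \<ge> 0" using assms(2) by force
  ultimately have "\<forall>k\<in>A - {j}. x k = 0"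
    using assms(1) by (subst (asm) sum_nonneg_eq_0_iff) auto
  then show thesis using that j(1) \<open>x j = 1\<close> by auto
qed

lemma single_association_tier_rates:
  fixes x r :: "'b \<Rightarrow> real"
  assumes "finite T" "finite S" "T \<inter> S = {}"
    and "\<And>j. j \<in> T \<union> S \<Longrightarrow> x j \<in> {0, 1}" "(\<Sum>j\<in>T \<union> S. x j) = 1"
    and "\<And>j. j \<in> T \<union> S \<Longrightarrow> r j > 0"
  shows "(\<exists>j\<in>S. x j = 1) \<Longrightarrow> (\<Sum>j\<in>S. x j * r j) > 0 \<and> (\<Sum>j\<in>T. x j * r j) = 0"
    and "\<not> (\<exists>j\<in>S. x j = 1) \<Longrightarrow> (\<Sum>j\<in>S. x j * r j) = 0 \<and> (\<Sum>j\<in>T. x j * r j) > 0"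
proof -
  obtain j0 where j0: "j0 \<in> T \<union> S" and x: "\<And>k. k \<in> T \<union> S \<Longrightarrow> x k = (if k = j0 then 1 else 0)"
    using binary_sum_eq_1_obtains_point[of "T \<union> S" x] assms by auto
  have rate: "(\<Sum>j\<in>C. x j * r j) = (if j0 \<in> C then r j0 else 0)" if "C \<subseteq> T \<union> S" "finite C" for C
  proof -
    have "(\<Sum>j\<in>C. x j * r j) = (\<Sum>j\<in>C. if j = j0 then r j0 else 0)"
      using that(1) x by (intro sum.cong) auto
    then show ?thesis using that(2) by simp
  qed
  have sat_iff: "(\<exists>j\<in>S. x j = 1) \<longleftrightarrow> j0 \<in> S" using x by auto
  show "(\<exists>j\<in>S. x j = 1) \<Longrightarrow> (\<Sum>j\<in>S. x j * r j) > 0 \<and> (\<Sum>j\<in>T. x j * r j) = 0"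
    and "\<not> (\<exists>j\<in>S. x j = 1) \<Longrightarrow> (\<Sum>j\<in>S. x j * r j) = 0 \<and> (\<Sum>j\<in>T. x j * r j) > 0"
    using rate[of S] rate[of T] sat_iff j0 assms(1-3,6) by auto
qed

lemma sum_eln_eq_minf:
  assumes "finite A" "i0 \<in> A" "f i0 \<le> 0"
  shows "(\<Sum>i\<in>A. eln (f i)) = -\<infinity>"
proof -
  have "(\<Sum>i\<in>A - {i0}. eln (f i)) \<noteq> \<infinity>"
    using assms(1) by (simp add: sum_Pinfty eln_def)
  then show ?thesis
    using assms by (simp add: sum.remove eln_def)
qed

lemma sum_eln_pos:
  assumes "\<And>i. i \<in> A \<Longrightarrow> f i > 0"
  shows "(\<Sum>i\<in>A. eln (f i)) = ereal (\<Sum>i\<in>A. ln (f i))"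
  using assms by (simp add: eln_def)

lemma sum_eln_less_of_tangent_nonpos:
  fixes y z :: "'i \<Rightarrow> real"
  assumes "finite U" "\<And>i. i \<in> U \<Longrightarrow> z i > 0" "\<exists>i\<in>U. y i \<noteq> z i"
    and "(\<Sum>i\<in>U. (y i - z i) / z i) \<le> 0"
  shows "(\<Sum>i\<in>U. eln (y i)) < (\<Sum>i\<in>U. eln (z i))"
proof (cases "\<forall>i\<in>U. y i > 0")
  case True
  have "(\<Sum>i\<in>U. ln (y i) - ln (z i)) < (\<Sum>i\<in>U. (y i - z i) / z i)"
    using assms(1-3) True
    by (intro sum_strict_mono_ex1) (auto intro: ln_diff_le ln_diff_less)
  then have "(\<Sum>i\<in>U. ln (y i)) < (\<Sum>i\<in>U. ln (z i))"
    using assms(4) by (simp add: sum_subtractf)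
  then show ?thesis
    using True assms(2) by (simp add: sum_eln_pos)
next
  case False
  then obtain i0 where "i0 \<in> U" "y i0 \<le> 0" by (auto simp: not_less)
  then show ?thesis
    using assms(1,2) by (simp add: sum_eln_eq_minf sum_eln_pos)
qed

lemma card_subset_ratio_pos:
  assumes "finite U" "Us \<subseteq> U" "Us \<noteq> {}"
  shows "real (card Us) / real (card U) > 0"
proof -
  have "card Us > 0" "card U > 0"
    using assms by (auto simp: card_gt_0_iff finite_subset)
  then show ?thesis by simp
qed

lemma card_subset_ratio_less_1:
  assumes "finite U" "Us \<subseteq> U" "U - Us \<noteq> {}"
  shows "real (card Us) / real (card U) < 1"
proof -
  have "card Us < card U" using assms by (intro psubset_card_mono) auto
  then show ?thesis by simp
qed

lemma tier_tangent_sum_nonpos: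
  fixes A B :: "'i \<Rightarrow> real"
  assumes "finite U" "Us \<subseteq> U" "U \<noteq> {}"
    and sat: "\<And>i. i \<in> Us \<Longrightarrow> A i > 0 \<and> B i = 0"
    and ter: "\<And>i. i \<in> U - Us \<Longrightarrow> A i = 0 \<and> B i > 0"
    and e: "0 \<le> e" "e \<le> 1"
    and p: "p = card Us / card U"
  shows "(\<Sum>i\<in>U. ((e * A i + (1 - e) * B i) - (p * A i + (1 - p) * B i))
                   / (p * A i + (1 - p) * B i)) \<le> 0"
proof -
  define a n where "a = real (card Us)" and "n = real (card U)"
  have n_pos: "n > 0" using assms(1,3) by (simp add: n_def card_gt_0_iff)
  have p_pos: "Us \<noteq> {} \<Longrightarrow> p > 0"
    using card_subset_ratio_pos[OF assms(1,2)] by (simp add: p)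
  have p_lt1: "U - Us \<noteq> {} \<Longrightarrow> p < 1"
    using card_subset_ratio_less_1[OF assms(1,2)] by (simp add: p)
  have "(\<Sum>i\<in>U. ((e * A i + (1 - e) * B i) - (p * A i + (1 - p) * B i))
                   / (p * A i + (1 - p) * B i))
        = (\<Sum>i\<in>U. if i \<in> Us then (e - p) / p else (p - e) / (1 - p))"
  proof (intro sum.cong refl)
    fix i assume "i \<in> U"
    show "((e * A i + (1 - e) * B i) - (p * A i + (1 - p) * B i)) / (p * A i + (1 - p) * B i)
          = (if i \<in> Us then (e - p) / p else (p - e) / (1 - p))"
    proof (cases "i \<in> Us")
      case True
      then have "p > 0" using p_pos by blast
      then show ?thesis using sat[OF True] True by (simp add: field_simps)
    next
      case False
      then have "p < 1" using \<open>i \<in> U\<close> p_lt1 by blast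
      then show ?thesis using ter[of i] \<open>i \<in> U\<close> False by (simp add: field_simps)
    qed
  qed
  also have "\<dots> = a * ((e - p) / p) + (n - a) * ((p - e) / (1 - p))"
    using assms(1,2)
    by (simp add: sum.If_cases Int_absorb1 Diff_eq[symmetric] a_def n_def card_Diff_subset
        finite_subset of_nat_diff card_mono)
  also have "\<dots> \<le> 0"
  proof -
    consider "Us = {}" | "Us = U" | "Us \<noteq> {}" "U - Us \<noteq> {}" using assms(2) by blast
    then show ?thesis
    proof cases
      case 1
      then show ?thesis using e n_pos by (simp add: a_def p)
    next
      case 2
      then show ?thesis using e n_pos by (simp add: a_def n_def p mult_nonneg_nonpos)
    next
      case 3
      \<comment> \<open>Interior optimum: \<open>a / p = (n - a) / (1 - p) = n\<close>, so the two tiers cancel.\<close>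
      have "p = a / n" by (simp add: p a_def n_def)
      then show ?thesis
        using 3 p_pos p_lt1 n_pos by (simp add: field_simps)
    qed
  qed
  finally show ?thesis .
qed

lemma argmax_eq_singleton:
  fixes F :: "'a \<Rightarrow> 'b :: linorder"
  assumes "p \<in> D" "\<And>e. e \<in> D \<Longrightarrow> e \<noteq> p \<Longrightarrow> F e < F p"
  shows "{\<epsilon> \<in> D. \<forall>e \<in> D. F e \<le> F \<epsilon>} = {p}"
  using assms by (force simp: not_le[symmetric])

lemma tier_utility_argmax:
  fixes A B :: "'i \<Rightarrow> real"
  assumes "finite U" "Us \<subseteq> U" "U \<noteq> {}"
    and sat: "\<And>i. i \<in> Us \<Longrightarrow> A i > 0 \<and> B i = 0"
    and ter: "\<And>i. i \<in> U - Us \<Longrightarrow> A i = 0 \<and> B i > 0"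
  shows "{\<epsilon> \<in> {0..1}. \<forall>e \<in> {0..1}.
            (\<Sum>i\<in>U. eln (e * A i + (1 - e) * B i)) \<le> (\<Sum>i\<in>U. eln (\<epsilon> * A i + (1 - \<epsilon>) * B i))}
         = {card Us / card U}"
proof (rule argmax_eq_singleton)
  define p where "p = real (card Us) / real (card U)"
  show "p \<in> {0..1}"
    using card_mono[OF assms(1,2)] assms(1,3) by (simp add: p_def divide_le_eq_1 card_gt_0_iff)
  have rate_pos: "p * A i + (1 - p) * B i > 0" if "i \<in> U" for i
  proof (cases "i \<in> Us")
    case True
    then have "p > 0" using card_subset_ratio_pos[OF assms(1,2)] by (auto simp: p_def)
    then show ?thesis using sat[OF True] by simp
  next
    case False
    then have "p < 1" using card_subset_ratio_less_1[OF assms(1,2)] that by (auto simp: p_def)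
    then show ?thesis using ter[of i] that False by simp
  qed
  fix e :: real assume e: "e \<in> {0..1}" "e \<noteq> p"
  obtain i where "i \<in> U" using assms(3) by blast
  then have "e * A i + (1 - e) * B i \<noteq> p * A i + (1 - p) * B i"
    using e(2) sat[of i] ter[of i] by (cases "i \<in> Us") auto
  then show "(\<Sum>i\<in>U. eln (e * A i + (1 - e) * B i)) < (\<Sum>i\<in>U. eln (p * A i + (1 - p) * B i))"
    using tier_tangent_sum_nonpos[OF assms, where e = e and p = p] e(1) rate_pos \<open>i \<in> U\<close>
    by (intro sum_eln_less_of_tangent_nonpos assms(1)) (auto simp: p_def)
qed

theorem proposition2:
  fixes K :: nat and T S :: "'b set"
    and x r :: "nat \<Rightarrow> 'b \<Rightarrow> real"
  assumes K_pos: "K \<ge> 1"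
    and fin_T: "finite T" and fin_S: "finite S"
    and disj: "T \<inter> S = {}"
    and x_bin: "\<And>i j. i \<in> {1..K} \<Longrightarrow> j \<in> T \<union> S \<Longrightarrow> x i j \<in> {0, 1}"
    and x_one: "\<And>i. i \<in> {1..K} \<Longrightarrow> (\<Sum>j\<in>T \<union> S. x i j) = 1"
    and r_pos: "\<And>i j. i \<in> {1..K} \<Longrightarrow> j \<in> T \<union> S \<Longrightarrow> r i j > 0"
  shows "{\<epsilon> \<in> {0..1}. \<forall>e \<in> {0..1}. utility K T S x r e \<le> utility K T S x r \<epsilon>}
           = {real (num_sat_users K S x) / real K}"
proof -
  define Us where "Us = {i \<in> {1..K}. \<exists>j\<in>S. x i j = 1}"
  define A where "A i = (\<Sum>j\<in>S. x i j * r i j)" for i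
  define B where "B i = (\<Sum>j\<in>T. x i j * r i j)" for i
  have "utility K T S x r e = (\<Sum>i\<in>{1..K}. eln (e * A i + (1 - e) * B i))" for e
    by (simp add: utility_def throughput_def A_def B_def sum_distrib_left mult.assoc)
  moreover have "{\<epsilon> \<in> {0..1}. \<forall>e \<in> {0..1}.
      (\<Sum>i\<in>{1..K}. eln (e * A i + (1 - e) * B i)) \<le> (\<Sum>i\<in>{1..K}. eln (\<epsilon> * A i + (1 - \<epsilon>) * B i))}
      = {card Us / card {1..K}}"
  proof (rule tier_utility_argmax)
    show "Us \<subseteq> {1..K}" "{1..K} \<noteq> {}" using K_pos by (auto simp: Us_def)
    show "A i > 0 \<and> B i = 0" if "i \<in> Us" for i
      using that single_association_tier_rates(1)[OF fin_T fin_S disj, of "x i" "r i"]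
        x_bin x_one r_pos by (auto simp: Us_def A_def B_def)
    show "A i = 0 \<and> B i > 0" if "i \<in> {1..K} - Us" for i
      using that single_association_tier_rates(2)[OF fin_T fin_S disj, of "x i" "r i"]
        x_bin x_one r_pos by (auto simp: Us_def A_def B_def)
  qed simp
  ultimately show ?thesis
    by (simp add: num_sat_users_def Us_def)
qed

end
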